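(* Let $\mathfrak{g}=V\rtimes\mathfrak{h}$ with $V$ an abelian ideal and $\mathfrak{h}$ a complementary subalgebra, let $\zeta\in\mathcal{Q}_0(\mathfrak{g})$ be a continuous normalized Lie quasi-state and let $X\in\mathfrak{h}$. Then the function $\zeta_X:V\to\mathbb{R}$, $\zeta_X(v)=\zeta(v,X)$, satisfies $\lim_{v\to\infty}\zeta_X(v)/\|v\|=0$ for any norm on $V$.
   Context: A Lie quasi-state is $\zeta:\mathfrak{g}\to\mathbb{R}$ with $\zeta(aX+bY)=a\zeta(X)+b\zeta(Y)$ for all $a,b\in\mathbb{R}$ and commuting $X,Y$. It is normalized if $\zeta(v,0)=\zeta(0,X)=0$ for all $v\in V$, $X\in\mathfrak{h}$; $\mathcal{Q}_0(\mathfrak{g})$ denotes the continuous normalized Lie quasi-states. *)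

theory Defs
  imports "HOL-Analysis.Analysis"
begin

definition lie_bracket :: "('h::euclidean_space \<Rightarrow> 'h \<Rightarrow> 'h) \<Rightarrow> bool" where
  "lie_bracket br \<longleftrightarrow> bilinear br \<and> (\<forall>X. br X X = 0) \<and>
     (\<forall>X Y Z. br X (br Y Z) + br Y (br Z X) + br Z (br X Y) = 0)"

text \<open>A representation of the Lie algebra (h, br) on the vector space V (action by derivations
  of the abelian Lie algebra V, i.e. by linear maps).\<close>
definition lie_rep :: "('h::euclidean_space \<Rightarrow> 'h \<Rightarrow> 'h) \<Rightarrow> ('h \<Rightarrow> 'v::euclidean_space \<Rightarrow> 'v) \<Rightarrow> bool" where
  "lie_rep br \<rho> \<longleftrightarrow> bilinear \<rho> \<and>
     (\<forall>X Y v. \<rho> (br X Y) v = \<rho> X (\<rho> Y v) - \<rho> Y (\<rho> X v))"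

definition sd_bracket :: "('h \<Rightarrow> 'h \<Rightarrow> 'h) \<Rightarrow> ('h \<Rightarrow> 'v \<Rightarrow> 'v::ab_group_add) \<Rightarrow>
    'v \<times> 'h \<Rightarrow> 'v \<times> 'h \<Rightarrow> 'v \<times> 'h" where
  "sd_bracket br \<rho> p q = (\<rho> (snd p) (fst q) - \<rho> (snd q) (fst p), br (snd p) (snd q))"

definition lie_quasi_state :: "('g \<Rightarrow> 'g \<Rightarrow> 'g::real_vector) \<Rightarrow> ('g \<Rightarrow> real) \<Rightarrow> bool" where
  "lie_quasi_state brg \<zeta> \<longleftrightarrow>
     (\<forall>x y a b. brg x y = 0 \<longrightarrow> \<zeta> (a *\<^sub>R x + b *\<^sub>R y) = a * \<zeta> x + b * \<zeta> y)"

definition normalized_qs :: "('v::zero \<times> 'h::zero \<Rightarrow> real) \<Rightarrow> bool" where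
  "normalized_qs \<zeta> \<longleftrightarrow> (\<forall>v. \<zeta> (v, 0) = 0) \<and> (\<forall>X. \<zeta> (0, X) = 0)"

definition Q0 :: "('h \<Rightarrow> 'h \<Rightarrow> 'h) \<Rightarrow> ('h \<Rightarrow> 'v \<Rightarrow> 'v) \<Rightarrow>
    (('v::euclidean_space \<times> 'h::euclidean_space) \<Rightarrow> real) set" where
  "Q0 br \<rho> = {\<zeta>. lie_quasi_state (sd_bracket br \<rho>) \<zeta> \<and> normalized_qs \<zeta> \<and> continuous_on UNIV \<zeta>}"

definition is_norm :: "('v::real_vector \<Rightarrow> real) \<Rightarrow> bool" where
  "is_norm N \<longleftrightarrow> (\<forall>v. N v = 0 \<longleftrightarrow> v = 0) \<and> (\<forall>a v. N (a *\<^sub>R v) = \<bar>a\<bar> * N v) \<and>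
     (\<forall>v w. N (v + w) \<le> N v + N w)"

end

theory Submission
  imports Defs
begin

text \<open>Every element of g commutes with itself, so a quasi-state is homogeneous:
  \<zeta> (a p) = a \<zeta> p. Writing (v, X) = t (u, X / t) with t = \<parallel>v\<parallel> and u on the unit sphere gives
  \<zeta> (v, X) / t = \<zeta> (u, X / t) - \<zeta> (u, 0), which tends to 0 uniformly in u by uniform continuity
  of \<zeta> on the compact set (unit sphere) \<times> [0, X]. Since V is finite-dimensional, any norm on V
  is equivalent to the Euclidean one.\<close>

lemma is_norm_zero: "is_norm N \<Longrightarrow> N 0 = 0"
  by (simp add: is_norm_def)

lemma is_norm_scaleR: "is_norm N \<Longrightarrow> N (a *\<^sub>R v) = \<bar>a\<bar> * N v"
  by (simp add: is_norm_def)

lemma is_norm_triangle: "is_norm N \<Longrightarrow> N (v + w) \<le> N v + N w"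
  by (simp add: is_norm_def)

lemma is_norm_minus: "is_norm N \<Longrightarrow> N (- v) = N v"
  unfolding is_norm_def by (metis abs_minus_cancel abs_one mult_1 scaleR_minus1_left)

lemma is_norm_nonneg:
  assumes "is_norm N" shows "0 \<le> N v"
proof -
  have "N (v + - v) \<le> N v + N (- v)" by (rule is_norm_triangle[OF assms])
  then show ?thesis using assms by (simp add: is_norm_zero is_norm_minus)
qed

lemma is_norm_diff_le:
  assumes "is_norm N" shows "\<bar>N x - N y\<bar> \<le> N (x - y)"
proof -
  have "N x \<le> N y + N (x - y)" "N y \<le> N x + N (y - x)"
    using is_norm_triangle[OF assms] by (metis add.commute diff_add_cancel)+
  moreover have "N (y - x) = N (x - y)" using is_norm_minus[OF assms, of "x - y"] by simp
  ultimately show ?thesis by linarith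
qed

lemma is_norm_sum_le:
  assumes "is_norm N"
  shows "N (sum f S) \<le> (\<Sum>i\<in>S. N (f i))"
proof (induction S rule: infinite_finite_induct)
  case (insert x F)
  have "N (f x + sum f F) \<le> N (f x) + N (sum f F)" by (rule is_norm_triangle[OF assms])
  with insert show ?case by simp
qed (simp_all add: is_norm_zero[OF assms])

lemma is_norm_le_mult_norm:
  fixes N :: "'v::euclidean_space \<Rightarrow> real"
  assumes "is_norm N"
  obtains C where "C > 0" "\<And>v. N v \<le> C * norm v"
proof
  define C where "C = (\<Sum>b\<in>Basis. N b) + 1"
  show "C > 0" unfolding C_def by (simp add: sum_nonneg add_nonneg_pos is_norm_nonneg[OF assms])
  fix v :: 'v
  have "N v = N (\<Sum>b\<in>Basis. (v \<bullet> b) *\<^sub>R b)" by (simp add: euclidean_representation)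
  also have "\<dots> \<le> (\<Sum>b\<in>Basis. \<bar>v \<bullet> b\<bar> * N b)"
    using is_norm_sum_le[OF assms, of "\<lambda>b. (v \<bullet> b) *\<^sub>R b" Basis]
    by (simp add: is_norm_scaleR[OF assms])
  also have "\<dots> \<le> (\<Sum>b\<in>Basis. norm v * N b)"
    by (intro sum_mono mult_right_mono) (simp_all add: Basis_le_norm is_norm_nonneg[OF assms])
  also have "\<dots> \<le> C * norm v" by (simp add: C_def sum_distrib_left algebra_simps)
  finally show "N v \<le> C * norm v" .
qed

lemma is_norm_continuous_on:
  fixes N :: "'v::euclidean_space \<Rightarrow> real"
  assumes "is_norm N"
  shows "continuous_on S N"
proof -
  obtain C where "C > 0" "\<And>v. N v \<le> C * norm v" using is_norm_le_mult_norm[OF assms] by blast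
  then have "C-lipschitz_on S N"
    by (intro lipschitz_onI)
      (auto simp: dist_norm dist_real_def intro: order_trans[OF is_norm_diff_le[OF assms]])
  then show ?thesis by (rule lipschitz_on_continuous_on)
qed

text \<open>The constant is the minimum of N on the Euclidean unit sphere.\<close>
lemma is_norm_ge_mult_norm:
  fixes N :: "'v::euclidean_space \<Rightarrow> real"
  assumes "is_norm N"
  obtains c where "c > 0" "\<And>v. c * norm v \<le> N v"
proof -
  obtain b :: 'v where "b \<in> Basis" using nonempty_Basis by blast
  then have "sphere (0::'v) 1 \<noteq> {}" by (auto simp: norm_Basis)
  then obtain u where u: "u \<in> sphere 0 1" "\<And>w. w \<in> sphere 0 1 \<Longrightarrow> N u \<le> N w"
    using continuous_attains_inf[OF compact_sphere _ is_norm_continuous_on[OF assms]] by blast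
  have "N u > 0"
    using u(1) assms is_norm_nonneg[OF assms, of u] by (auto simp: is_norm_def less_le)
  moreover have "N u * norm v \<le> N v" for v
  proof (cases "v = 0")
    case False
    have "N u \<le> N ((1 / norm v) *\<^sub>R v)" using u(2) False by simp
    also have "\<dots> = N v / norm v" by (simp add: is_norm_scaleR[OF assms])
    finally show ?thesis using False by (simp add: field_simps)
  qed (simp add: is_norm_zero[OF assms])
  ultimately show ?thesis using that by blast
qed

lemma lie_quasi_state_scaleR:
  assumes "lie_quasi_state brg \<zeta>" "brg p p = 0"
  shows "\<zeta> (a *\<^sub>R p) = a * \<zeta> p"
  using assms unfolding lie_quasi_state_def
  by (metis add.right_neutral mult_zero_left scaleR_zero_left)

lemma sd_bracket_self:
  assumes "lie_bracket br"
  shows "sd_bracket br \<rho> p p = 0"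
  using assms by (simp add: sd_bracket_def lie_bracket_def zero_prod_def)

lemma Q0_scaleR:
  assumes "lie_bracket br" "\<zeta> \<in> Q0 br \<rho>"
  shows "\<zeta> (a *\<^sub>R p) = a * \<zeta> p"
  using assms(2) lie_quasi_state_scaleR sd_bracket_self[OF assms(1)] unfolding Q0_def by blast

lemma homogeneous_sublinear_in_first:
  fixes \<zeta> :: "'v::{real_normed_vector,perfect_space,heine_borel} \<times> 'h::real_normed_vector \<Rightarrow> real"
  assumes cont: "continuous_on UNIV \<zeta>"
    and hom: "\<And>a p. \<zeta> (a *\<^sub>R p) = a * \<zeta> p"
    and axis: "\<And>v. \<zeta> (v, 0) = 0"
    and "\<epsilon> > 0"
  shows "\<exists>R. \<forall>v. norm v \<ge> R \<longrightarrow> \<bar>\<zeta> (v, X)\<bar> \<le> \<epsilon> * norm v"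
proof -
  define K where "K = sphere (0::'v) 1 \<times> closed_segment 0 X"
  have "compact K"
    unfolding K_def by (intro compact_Times compact_segment compact_sphere)
  have "uniformly_continuous_on K \<zeta>"
    by (rule compact_uniformly_continuous[OF continuous_on_subset[OF cont subset_UNIV] \<open>compact K\<close>])
  then obtain d where "d > 0"
    and d: "\<And>p q. p \<in> K \<Longrightarrow> q \<in> K \<Longrightarrow> dist q p < d \<Longrightarrow> dist (\<zeta> q) (\<zeta> p) < \<epsilon>"
    using \<open>\<epsilon> > 0\<close> unfolding uniformly_continuous_on_def by metis
  show ?thesis
  proof (intro exI allI impI)
    fix v :: 'v
    assume v: "norm v \<ge> max 1 (norm X / d + 1)"
    define t where "t = norm v"
    define u where "u = (1 / t) *\<^sub>R v"
    have "t \<ge> 1" "norm X / d < t"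
      using v by (simp_all add: t_def)
    then have "norm X / t < d"
      using \<open>d > 0\<close> by (simp add: field_simps)
    have "u \<in> sphere 0 1"
      using \<open>t \<ge> 1\<close> by (auto simp: u_def t_def)
    moreover have "(1 / t) *\<^sub>R X \<in> closed_segment 0 X"
      using \<open>t \<ge> 1\<close> by (auto simp: closed_segment_def intro!: exI[of _ "1 / t"])
    ultimately have "(u, 0) \<in> K" "(u, (1 / t) *\<^sub>R X) \<in> K"
      by (auto simp: K_def)
    moreover have "dist (u, (1 / t) *\<^sub>R X) (u, 0) < d"
      using \<open>t \<ge> 1\<close> \<open>norm X / t < d\<close> by (simp add: dist_Pair_Pair)
    ultimately have "\<bar>\<zeta> (u, (1 / t) *\<^sub>R X)\<bar> < \<epsilon>"
      using d by (fastforce simp: axis dist_real_def)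
    moreover have "\<zeta> (v, X) = t * \<zeta> (u, (1 / t) *\<^sub>R X)"
      using hom[of t "(u, (1 / t) *\<^sub>R X)"] \<open>t \<ge> 1\<close> by (simp add: u_def)
    ultimately show "\<bar>\<zeta> (v, X)\<bar> \<le> \<epsilon> * norm v"
      using \<open>t \<ge> 1\<close> by (simp add: abs_mult t_def mult.commute[of \<epsilon>] mult_left_mono)
  qed
qed

lemma is_norm_sublinear_transfer:
  fixes N :: "'v::euclidean_space \<Rightarrow> real"
  assumes "is_norm N"
    and sublinear: "\<And>\<epsilon>. \<epsilon> > 0 \<Longrightarrow> \<exists>R. \<forall>v. norm v \<ge> R \<longrightarrow> \<bar>f v\<bar> \<le> \<epsilon> * norm v"
  shows "\<forall>\<epsilon>>0. \<exists>R. \<forall>v. N v \<ge> R \<longrightarrow> \<bar>f v\<bar> \<le> \<epsilon> * N v"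
proof (intro allI impI)
  fix \<epsilon> :: real
  assume "\<epsilon> > 0"
  obtain C where "C > 0" and C: "\<And>v. N v \<le> C * norm v"
    using is_norm_le_mult_norm[OF assms(1)] by blast
  obtain c where "c > 0" and c: "\<And>v. c * norm v \<le> N v"
    using is_norm_ge_mult_norm[OF assms(1)] by blast
  obtain R where R: "\<And>v. norm v \<ge> R \<Longrightarrow> \<bar>f v\<bar> \<le> (\<epsilon> * c) * norm v"
    using sublinear[of "\<epsilon> * c"] \<open>\<epsilon> > 0\<close> \<open>c > 0\<close> by auto
  show "\<exists>R. \<forall>v. N v \<ge> R \<longrightarrow> \<bar>f v\<bar> \<le> \<epsilon> * N v"
  proof (intro exI allI impI)
    fix v
    assume "C * R \<le> N v"
    then have "C * R \<le> C * norm v"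
      using C[of v] by linarith
    then have "norm v \<ge> R"
      using \<open>C > 0\<close> by simp
    then have "\<bar>f v\<bar> \<le> \<epsilon> * (c * norm v)"
      using R by (simp add: mult.assoc)
    also have "\<dots> \<le> \<epsilon> * N v"
      using c[of v] \<open>\<epsilon> > 0\<close> by simp
    finally show "\<bar>f v\<bar> \<le> \<epsilon> * N v" .
  qed
qed

theorem mainTheorem8:
  fixes br :: "'h::euclidean_space \<Rightarrow> 'h \<Rightarrow> 'h"
    and \<rho> :: "'h \<Rightarrow> 'v::euclidean_space \<Rightarrow> 'v"
    and \<zeta> :: "'v \<times> 'h \<Rightarrow> real"
    and X :: 'h
    and N :: "'v \<Rightarrow> real"
  assumes "lie_bracket br"
    and "lie_rep br \<rho>"
    and "\<zeta> \<in> Q0 br \<rho>"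
    and "is_norm N"
  shows "\<forall>\<epsilon>>0. \<exists>R. \<forall>v. N v \<ge> R \<longrightarrow> \<bar>\<zeta> (v, X)\<bar> \<le> \<epsilon> * N v"
proof (rule is_norm_sublinear_transfer[OF assms(4)])
  fix \<epsilon> :: real
  assume "\<epsilon> > 0"
  have "continuous_on UNIV \<zeta>" and "\<And>v. \<zeta> (v, 0) = 0"
    using assms(3) by (simp_all add: Q0_def normalized_qs_def)
  with \<open>\<epsilon> > 0\<close> show "\<exists>R. \<forall>v. norm v \<ge> R \<longrightarrow> \<bar>\<zeta> (v, X)\<bar> \<le> \<epsilon> * norm v"
    by (intro homogeneous_sublinear_in_first Q0_scaleR[OF assms(1,3)])
qed

end
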